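(* Let $n\ge 1$, $y\in\mathbb{R}^n$ and $\lambda\ge 0$, and let $$\hat\theta^{(\lambda)}=\operatorname{argmin}_{\theta\in\mathbb{R}^n}\ \frac12\sum_{i=1}^n (y_i-\theta_i)^2+\lambda\sum_{i=1}^{n-1}|\theta_{i+1}-\theta_i|$$ be the (univariate) Total Variation Denoising / Fused Lasso estimator. Then for every $i\in[n]$, $$\max_{J\in\mathcal{I}:\, i\in J}\ \min_{I\in\mathcal{I}:\, i\in I,\ I\subseteq J}\Big[\overline{y}_I+C_{I,J}\frac{2\lambda}{|I|}\Big]\ \le\ \hat\theta^{(\lambda)}_i\ \le\ \min_{J\in\mathcal{I}:\, i\in J}\ \max_{I\in\mathcal{I}:\, i\in I,\ I\subseteq J}\Big[\overline{y}_I-C_{I,J}\frac{2\lambda}{|I|}\Big].$$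
   Context: $[n]=\{1,\dots,n\}$. An interval of $[n]$ is a set $[a:b]=\{a,a+1,\dots,b\}$ with $1\le a\le b\le n$; $\mathcal{I}$ denotes the set of all intervals of $[n]$, and $|I|$ the cardinality of $I$. For $I\subseteq[n]$, $\overline{y}_I$ is the average of the entries $y_j$, $j\in I$. For intervals $I\subseteq J$, with $J=[j_1:j_2]$: $C_{I,J}=1$ if $I$ contains neither endpoint $j_1$ nor $j_2$ of $J$; $C_{I,J}=-1$ if $I=J$; and $C_{I,J}=0$ otherwise. *)

theory Defs
  imports Complex_Main
begin

text \<open>Vectors in R^n are represented as functions nat => real; only indices 1..n matter.\<close>

definition tv_obj :: "nat \<Rightarrow> real \<Rightarrow> (nat \<Rightarrow> real) \<Rightarrow> (nat \<Rightarrow> real) \<Rightarrow> real" where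
  "tv_obj n lam y \<theta> =
     (1/2) * (\<Sum>i=1..n. (y i - \<theta> i)^2) + lam * (\<Sum>i=1..n-1. \<bar>\<theta> (i+1) - \<theta> i\<bar>)"

definition intervals :: "nat \<Rightarrow> nat set set" where
  "intervals n = {{a..b} | a b. 1 \<le> a \<and> a \<le> b \<and> b \<le> n}"

definition avg :: "(nat \<Rightarrow> real) \<Rightarrow> nat set \<Rightarrow> real" where
  "avg y I = (\<Sum>j\<in>I. y j) / real (card I)"

definition CIJ :: "nat set \<Rightarrow> nat set \<Rightarrow> real" where
  "CIJ I J = (if Min J \<notin> I \<and> Max J \<notin> I then 1 else if I = J then -1 else 0)"

end

theory Submission
  imports Defs
begin

text \<open>Fix an interval \<open>J \<ni> i\<close> and let \<open>I = [a:b]\<close> be the maximal run around \<open>i\<close> inside \<open>J\<close>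
  on which \<open>\<theta> \<ge> \<theta> i\<close>. Lowering \<open>\<theta>\<close> by a small \<open>e > 0\<close> on \<open>I\<close> changes the squared loss by
  \<open>-e \<cdot> (sum of y - \<theta> over I) + O(e\<^sup>2)\<close>. An edge of \<open>I\<close> that lies inside \<open>J\<close> is a strict
  descent out of \<open>I\<close>, so its variation drops by exactly \<open>e\<close>; any other boundary edge gains at
  most \<open>e\<close>. Optimality of \<open>\<theta>\<close> therefore forces the sum of \<open>y - \<theta>\<close> over \<open>I\<close> to be at least
  \<open>2 \<lambda> C\<^sub>I\<^sub>,\<^sub>J\<close>, and \<open>\<theta> \<ge> \<theta> i\<close> on \<open>I\<close> turns this into the upper bound. The lower bound
  is the upper bound for \<open>(-y, -\<theta>)\<close>.\<close>

lemma nonneg_if_eventually_nonneg_at_right: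
  fixes A B e0 :: real
  assumes "0 < e0" and "\<And>e. 0 < e \<Longrightarrow> e < e0 \<Longrightarrow> 0 \<le> A + B * e"
  shows "0 \<le> A"
proof (rule tendsto_lowerbound)
  show "((\<lambda>e. A + B * e) \<longlongrightarrow> A) (at_right 0)"
    by (auto intro!: tendsto_eq_intros)
  show "\<forall>\<^sub>F e in at_right 0. 0 \<le> A + B * e"
    using eventually_at_right_real[OF assms(1)] by eventually_elim (use assms(2) in auto)
qed simp

lemma sum_sq_lower_on:
  fixes y \<theta> :: "nat \<Rightarrow> real"
  assumes "finite A" "B \<subseteq> A"
  shows "(\<Sum>k\<in>A. (y k - (if k \<in> B then \<theta> k - e else \<theta> k))^2)
       = (\<Sum>k\<in>A. (y k - \<theta> k)^2) + 2 * e * (\<Sum>k\<in>B. y k - \<theta> k) + real (card B) * e^2"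
proof -
  have "(\<Sum>k\<in>A. (y k - (if k \<in> B then \<theta> k - e else \<theta> k))^2)
      = (\<Sum>k\<in>A. (y k - \<theta> k)^2 + (if k \<in> B then 2 * e * (y k - \<theta> k) + e^2 else 0))"
    by (rule sum.cong) (auto simp: power2_eq_square algebra_simps)
  also have "\<dots> = (\<Sum>k\<in>A. (y k - \<theta> k)^2) + (\<Sum>k\<in>B. 2 * e * (y k - \<theta> k) + e^2)"
    using assms by (simp add: sum.distrib sum.If_cases Int_absorb1)
  finally show ?thesis
    by (simp add: sum.distrib sum_distrib_left)
qed

lemma maximal_run_left:
  fixes P :: "nat \<Rightarrow> bool"
  assumes "P i" "c \<le> i"
  obtains a where "c \<le> a" "a \<le> i" "\<forall>j\<in>{a..i}. P j" "c < a \<Longrightarrow> \<not> P (a - 1)"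
proof -
  define A where "A = {k \<in> {c..i}. \<forall>j\<in>{k..i}. P j}"
  have "finite A"
    by (simp add: A_def)
  moreover have "i \<in> A"
    using assms by (simp add: A_def)
  ultimately obtain a where "a \<in> A" and a_min: "\<And>k. k \<in> A \<Longrightarrow> a \<le> k"
    using Min_in[of A] Min_le[of A] by blast
  then have a: "c \<le> a" "a \<le> i" "\<forall>j\<in>{a..i}. P j"
    by (simp_all add: A_def)
  moreover have "\<not> P (a - 1)" if "c < a"
  proof
    assume "P (a - 1)"
    moreover have "{a - 1..i} = insert (a - 1) {a..i}"
      using that a(2) by auto
    ultimately have "a - 1 \<in> A"
      using a that by (auto simp: A_def)
    with a_min that show False
      by fastforce
  qed
  ultimately show thesis
    using that by blast
qed

lemma maximal_run_right:
  fixes P :: "nat \<Rightarrow> bool"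
  assumes "P i" "i \<le> d"
  obtains b where "i \<le> b" "b \<le> d" "\<forall>j\<in>{i..b}. P j" "b < d \<Longrightarrow> \<not> P (b + 1)"
proof -
  define B where "B = {k \<in> {i..d}. \<forall>j\<in>{i..k}. P j}"
  have "finite B"
    by (simp add: B_def)
  moreover have "i \<in> B"
    using assms by (simp add: B_def)
  ultimately obtain b where "b \<in> B" and b_max: "\<And>k. k \<in> B \<Longrightarrow> k \<le> b"
    using Max_in[of B] Max_ge[of B] by blast
  then have b: "i \<le> b" "b \<le> d" "\<forall>j\<in>{i..b}. P j"
    by (simp_all add: B_def)
  moreover have "\<not> P (b + 1)" if "b < d"
  proof
    assume "P (b + 1)"
    moreover have "{i..b + 1} = insert (b + 1) {i..b}"
      using b(1) by auto
    ultimately have "b + 1 \<in> B"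
      using b that by (simp add: B_def)
    with b_max show False
      by fastforce
  qed
  ultimately show thesis
    using that by blast
qed

lemma le_Min_Max_if_witnesses:
  fixes f :: "'a \<Rightarrow> 'b \<Rightarrow> 'c::linorder"
  assumes "finite S" "S \<noteq> {}" "\<And>J. J \<in> S \<Longrightarrow> finite (T J)"
    and "\<And>J. J \<in> S \<Longrightarrow> \<exists>I\<in>T J. x \<le> f J I"
  shows "x \<le> (MIN J\<in>S. MAX I\<in>T J. f J I)"
proof -
  have "x \<le> (MAX I\<in>T J. f J I)" if "J \<in> S" for J
    using assms(3,4)[OF that] by (meson Max_ge finite_imageI imageI order_trans)
  with assms(1,2) show ?thesis
    by (simp add: Min_ge_iff)
qed

lemma Max_Min_le_if_witnesses:
  fixes f :: "'a \<Rightarrow> 'b \<Rightarrow> 'c::linorder"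
  assumes "finite S" "S \<noteq> {}" "\<And>J. J \<in> S \<Longrightarrow> finite (T J)"
    and "\<And>J. J \<in> S \<Longrightarrow> \<exists>I\<in>T J. f J I \<le> x"
  shows "(MAX J\<in>S. MIN I\<in>T J. f J I) \<le> x"
proof -
  have "(MIN I\<in>T J. f J I) \<le> x" if "J \<in> S" for J
    using assms(3,4)[OF that] by (meson Min_le finite_imageI imageI order_trans)
  with assms(1,2) show ?thesis
    by (simp add: Max_le_iff)
qed

lemma finite_intervals: "finite (intervals n)"
  by (rule finite_subset[of _ "Pow {1..n}"]) (auto simp: intervals_def)

lemma singleton_in_intervals: "i \<in> {1..n} \<Longrightarrow> {i} \<in> intervals n"
  unfolding intervals_def by (auto intro!: exI[of _ i])

lemma CIJ_atLeastAtMost: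
  assumes "c \<le> a" "a \<le> b" "b \<le> d"
  shows "CIJ {a..b} {c..d} = (if c < a \<and> b < d then 1 else if a = c \<and> b = d then -1 else 0)"
proof -
  have "Min {c..d} = c" "Max {c..d} = d"
    using assms by (intro Min_eqI Max_eqI; auto)+
  moreover have "{a..b} = {c..d} \<longleftrightarrow> a = c \<and> b = d"
    using assms by (simp add: Icc_eq_Icc)
  ultimately show ?thesis
    using assms by (auto simp: CIJ_def)
qed

lemma avg_uminus: "avg (\<lambda>k. - y k) I = - avg y I"
  by (simp add: avg_def sum_negf)

lemma tv_obj_uminus: "tv_obj n lam (\<lambda>k. - y k) (\<lambda>k. - \<phi> k) = tv_obj n lam y \<phi>"
proof -
  have "(\<Sum>k=1..n. (- y k - - \<phi> k)^2) = (\<Sum>k=1..n. (y k - \<phi> k)^2)"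
    by (rule sum.cong) (auto simp: power2_eq_square algebra_simps)
  moreover have "(\<Sum>k=1..n-1. \<bar>- \<phi> (k+1) - - \<phi> k\<bar>) = (\<Sum>k=1..n-1. \<bar>\<phi> (k+1) - \<phi> k\<bar>)"
    by (rule sum.cong) auto
  ultimately show ?thesis
    by (simp add: tv_obj_def)
qed

lemma tv_minimizer_uminus:
  assumes "\<forall>\<phi>. tv_obj n lam y \<theta> \<le> tv_obj n lam y \<phi>"
  shows "\<forall>\<phi>. tv_obj n lam (\<lambda>k. - y k) (\<lambda>k. - \<theta> k) \<le> tv_obj n lam (\<lambda>k. - y k) \<phi>"
proof
  fix \<phi> :: "nat \<Rightarrow> real"
  have "tv_obj n lam (\<lambda>k. - y k) \<phi> = tv_obj n lam y (\<lambda>k. - \<phi> k)"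
    using tv_obj_uminus[of n lam y "\<lambda>k. - \<phi> k"] by simp
  then show "tv_obj n lam (\<lambda>k. - y k) (\<lambda>k. - \<theta> k) \<le> tv_obj n lam (\<lambda>k. - y k) \<phi>"
    using assms by (simp add: tv_obj_uminus)
qed

lemma variation_lower_on_le:
  fixes \<theta> :: "nat \<Rightarrow> real"
  assumes "1 \<le> c" "c \<le> a" "a \<le> b" "b \<le> d" "d \<le> n" "0 \<le> e"
    and left: "c < a \<Longrightarrow> \<theta> (a - 1) + e \<le> \<theta> a"
    and right: "b < d \<Longrightarrow> \<theta> (b + 1) + e \<le> \<theta> b"
  defines "\<phi> \<equiv> \<lambda>k. if k \<in> {a..b} then \<theta> k - e else \<theta> k"
  shows "(\<Sum>k=1..n-1. \<bar>\<phi> (k+1) - \<phi> k\<bar>)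
       \<le> (\<Sum>k=1..n-1. \<bar>\<theta> (k+1) - \<theta> k\<bar>) - 2 * e * CIJ {a..b} {c..d}"
proof -
  define sa :: real where "sa = (if c < a then -1 else 1)"
  define sb :: real where "sb = (if b < d then -1 else 1)"
  have edge: "\<bar>\<phi> (k+1) - \<phi> k\<bar> - \<bar>\<theta> (k+1) - \<theta> k\<bar>
      \<le> (if k = a - 1 then e * sa else 0) + (if k = b then e * sb else 0)" for k
  proof -
    consider "k = a - 1" | "k = b" | "k \<noteq> a - 1" "k \<noteq> b" by blast
    then show ?thesis
    proof cases
      case 1
      then have "k \<noteq> b" "\<phi> k = \<theta> k" "\<phi> (k+1) = \<theta> (k+1) - e"
        using assms(1-3) by (auto simp: \<phi>_def)
      then show ?thesis
        using 1 left \<open>0 \<le> e\<close> by (cases "c < a") (auto simp: sa_def split: abs_split)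
    next
      case 2
      then have "k \<noteq> a - 1" "\<phi> k = \<theta> k - e" "\<phi> (k+1) = \<theta> (k+1)"
        using assms(1-3) by (auto simp: \<phi>_def)
      then show ?thesis
        using 2 right \<open>0 \<le> e\<close> by (cases "b < d") (auto simp: sb_def split: abs_split)
    next
      case 3
      then have "\<phi> (k+1) - \<phi> k = \<theta> (k+1) - \<theta> k"
        by (auto simp: \<phi>_def)
      then show ?thesis
        using 3 by simp
    qed
  qed
  have "(\<Sum>k=1..n-1. \<bar>\<phi> (k+1) - \<phi> k\<bar>) - (\<Sum>k=1..n-1. \<bar>\<theta> (k+1) - \<theta> k\<bar>)
      \<le> (\<Sum>k=1..n-1. (if k = a - 1 then e * sa else 0) + (if k = b then e * sb else 0))"
    unfolding sum_subtractf[symmetric] by (rule sum_mono) (rule edge)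
  also have "\<dots> = (if a - 1 \<in> {1..n-1} then e * sa else 0) + (if b \<in> {1..n-1} then e * sb else 0)"
    by (simp add: sum.distrib)
  also have "\<dots> \<le> e * (sa + sb)"
    using assms(1-6) by (auto simp: sa_def sb_def algebra_simps)
  also have "\<dots> = - 2 * e * CIJ {a..b} {c..d}"
    using assms(2-4) by (auto simp: sa_def sb_def CIJ_atLeastAtMost)
  finally show ?thesis
    by simp
qed

lemma tv_obj_lower_on_le:
  fixes y \<theta> :: "nat \<Rightarrow> real"
  assumes "0 \<le> lam" "1 \<le> c" "c \<le> a" "a \<le> b" "b \<le> d" "d \<le> n" "0 \<le> e"
    and "c < a \<Longrightarrow> \<theta> (a - 1) + e \<le> \<theta> a"
    and "b < d \<Longrightarrow> \<theta> (b + 1) + e \<le> \<theta> b"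
  shows "tv_obj n lam y (\<lambda>k. if k \<in> {a..b} then \<theta> k - e else \<theta> k)
       \<le> tv_obj n lam y \<theta>
          + e * ((\<Sum>k\<in>{a..b}. y k - \<theta> k) + real (card {a..b}) * e / 2 - 2 * lam * CIJ {a..b} {c..d})"
proof -
  define \<phi> where "\<phi> = (\<lambda>k. if k \<in> {a..b} then \<theta> k - e else \<theta> k)"
  have "{a..b} \<subseteq> {1..n}"
    using assms(2-6) by auto
  from sum_sq_lower_on[OF finite_atLeastAtMost this]
  have "(\<Sum>k=1..n. (y k - \<phi> k)^2)
      = (\<Sum>k=1..n. (y k - \<theta> k)^2) + 2 * e * (\<Sum>k\<in>{a..b}. y k - \<theta> k) + real (card {a..b}) * e^2"
    by (simp add: \<phi>_def)
  moreover have "lam * (\<Sum>k=1..n-1. \<bar>\<phi> (k+1) - \<phi> k\<bar>)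
      \<le> lam * ((\<Sum>k=1..n-1. \<bar>\<theta> (k+1) - \<theta> k\<bar>) - 2 * e * CIJ {a..b} {c..d})"
    using variation_lower_on_le[OF assms(2-9)] \<open>0 \<le> lam\<close> unfolding \<phi>_def by (rule mult_left_mono)
  ultimately show ?thesis
    unfolding tv_obj_def \<phi>_def[symmetric] by (simp add: power2_eq_square algebra_simps)
qed

lemma tv_minimizer_block_sum_ge:
  fixes y \<theta> :: "nat \<Rightarrow> real"
  assumes opt: "\<forall>\<phi>. tv_obj n lam y \<theta> \<le> tv_obj n lam y \<phi>" and "0 \<le> lam"
    and "1 \<le> c" "c \<le> a" "a \<le> b" "b \<le> d" "d \<le> n"
    and left: "c < a \<Longrightarrow> \<theta> (a - 1) < \<theta> a"
    and right: "b < d \<Longrightarrow> \<theta> (b + 1) < \<theta> b"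
  shows "2 * lam * CIJ {a..b} {c..d} \<le> (\<Sum>k\<in>{a..b}. y k - \<theta> k)"
proof -
  define S where "S = (\<Sum>k\<in>{a..b}. y k - \<theta> k) - 2 * lam * CIJ {a..b} {c..d}"
  define e0 where "e0 = min (if c < a then \<theta> a - \<theta> (a - 1) else 1) (if b < d then \<theta> b - \<theta> (b + 1) else 1)"
  have "0 < e0"
    using left right by (simp add: e0_def)
  moreover have "0 \<le> S + real (card {a..b}) / 2 * e" if e: "0 < e" "e < e0" for e
  proof -
    have "c < a \<Longrightarrow> \<theta> (a - 1) + e \<le> \<theta> a" "b < d \<Longrightarrow> \<theta> (b + 1) + e \<le> \<theta> b"
      using e(2) by (auto simp: e0_def)
    then have "tv_obj n lam y (\<lambda>k. if k \<in> {a..b} then \<theta> k - e else \<theta> k)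
        \<le> tv_obj n lam y \<theta> + e * (S + real (card {a..b}) / 2 * e)"
      using tv_obj_lower_on_le[OF assms(2-7) less_imp_le[OF e(1)]] by (simp add: S_def algebra_simps)
    moreover have "tv_obj n lam y \<theta> \<le> tv_obj n lam y (\<lambda>k. if k \<in> {a..b} then \<theta> k - e else \<theta> k)"
      using opt by blast
    ultimately have "0 \<le> e * (S + real (card {a..b}) / 2 * e)"
      by linarith
    with e(1) show ?thesis
      by (simp add: zero_le_mult_iff)
  qed
  ultimately have "0 \<le> S"
    by (rule nonneg_if_eventually_nonneg_at_right)
  then show ?thesis
    by (simp add: S_def)
qed

lemma tv_minimizer_le_avg_minus_CIJ:
  fixes y \<theta> :: "nat \<Rightarrow> real"
  assumes opt: "\<forall>\<phi>. tv_obj n lam y \<theta> \<le> tv_obj n lam y \<phi>" and "0 \<le> lam"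
    and J: "J \<in> intervals n" "i \<in> J"
  shows "\<exists>I\<in>{I\<in>intervals n. i \<in> I \<and> I \<subseteq> J}. \<theta> i \<le> avg y I - CIJ I J * (2 * lam / real (card I))"
proof -
  obtain c d where cd: "J = {c..d}" "1 \<le> c" "d \<le> n" "c \<le> i" "i \<le> d"
    using J by (auto simp: intervals_def)
  obtain a where a: "c \<le> a" "a \<le> i" "\<forall>j\<in>{a..i}. \<theta> i \<le> \<theta> j" "c < a \<Longrightarrow> \<not> \<theta> i \<le> \<theta> (a - 1)"
    using maximal_run_left[of "\<lambda>j. \<theta> i \<le> \<theta> j"] cd(4) by blast
  obtain b where b: "i \<le> b" "b \<le> d" "\<forall>j\<in>{i..b}. \<theta> i \<le> \<theta> j" "b < d \<Longrightarrow> \<not> \<theta> i \<le> \<theta> (b + 1)"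
    using maximal_run_right[of "\<lambda>j. \<theta> i \<le> \<theta> j"] cd(5) by blast
  have run: "\<theta> i \<le> \<theta> j" if "j \<in> {a..b}" for j
    using a(3) b(3) that by (cases "j \<le> i") auto
  define m where "m = real (card {a..b})"
  have "m > 0"
    using a(2) b(1) by (simp add: m_def)
  have "2 * lam * CIJ {a..b} {c..d} \<le> (\<Sum>k\<in>{a..b}. y k - \<theta> k)"
  proof (rule tv_minimizer_block_sum_ge[OF opt \<open>0 \<le> lam\<close> cd(2) a(1) _ b(2) cd(3)])
    show "a \<le> b" using a(2) b(1) by simp
    show "\<theta> (a - 1) < \<theta> a" if "c < a"
      using a(4)[OF that] run[of a] a(2) b(1) by simp
    show "\<theta> (b + 1) < \<theta> b" if "b < d"
      using b(4)[OF that] run[of b] a(2) b(1) by simp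
  qed
  also have "\<dots> = (\<Sum>k\<in>{a..b}. y k) - (\<Sum>k\<in>{a..b}. \<theta> k)"
    by (simp add: sum_subtractf)
  also have "\<dots> \<le> (\<Sum>k\<in>{a..b}. y k) - m * \<theta> i"
    using sum_mono[of "{a..b}" "\<lambda>_. \<theta> i" \<theta>] run by (simp add: m_def)
  finally have "\<theta> i \<le> (\<Sum>k\<in>{a..b}. y k) / m - CIJ {a..b} {c..d} * (2 * lam / m)"
    using \<open>m > 0\<close> by (simp add: field_simps)
  then have "\<theta> i \<le> avg y {a..b} - CIJ {a..b} {c..d} * (2 * lam / m)"
    by (simp add: avg_def m_def)
  moreover have "{a..b} \<in> intervals n"
    using a b cd by (force simp: intervals_def)
  ultimately show ?thesis
    using a b cd(1) unfolding m_def by auto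
qed

lemma tv_minimizer_ge_avg_plus_CIJ:
  fixes y \<theta> :: "nat \<Rightarrow> real"
  assumes "\<forall>\<phi>. tv_obj n lam y \<theta> \<le> tv_obj n lam y \<phi>" and "0 \<le> lam"
    and "J \<in> intervals n" "i \<in> J"
  shows "\<exists>I\<in>{I\<in>intervals n. i \<in> I \<and> I \<subseteq> J}. avg y I + CIJ I J * (2 * lam / real (card I)) \<le> \<theta> i"
proof -
  from tv_minimizer_le_avg_minus_CIJ[OF tv_minimizer_uminus[OF assms(1)] assms(2-4)]
  obtain I where "I \<in> {I\<in>intervals n. i \<in> I \<and> I \<subseteq> J}"
    and "- \<theta> i \<le> avg (\<lambda>k. - y k) I - CIJ I J * (2 * lam / real (card I))"
    by blast
  then show ?thesis
    by (auto simp: avg_uminus)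
qed

theorem theorem1:
  fixes n :: nat and y \<theta> :: "nat \<Rightarrow> real" and lam :: real and i :: nat
  assumes "n \<ge> 1" and "lam \<ge> 0"
    and "\<forall>\<phi>. tv_obj n lam y \<theta> \<le> tv_obj n lam y \<phi>"
    and "i \<in> {1..n}"
  shows "(MAX J\<in>{J\<in>intervals n. i \<in> J}.
            MIN I\<in>{I\<in>intervals n. i \<in> I \<and> I \<subseteq> J}. avg y I + CIJ I J * (2 * lam / real (card I)))
           \<le> \<theta> i
       \<and> \<theta> i \<le> (MIN J\<in>{J\<in>intervals n. i \<in> J}.
            MAX I\<in>{I\<in>intervals n. i \<in> I \<and> I \<subseteq> J}. avg y I - CIJ I J * (2 * lam / real (card I)))"
proof -
  have "finite {J\<in>intervals n. i \<in> J}" "\<And>J. finite {I\<in>intervals n. i \<in> I \<and> I \<subseteq> J}"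
    using finite_intervals by auto
  moreover have "{J\<in>intervals n. i \<in> J} \<noteq> {}"
    using singleton_in_intervals[OF assms(4)] by auto
  ultimately show ?thesis
    using tv_minimizer_ge_avg_plus_CIJ[OF assms(3,2)] tv_minimizer_le_avg_minus_CIJ[OF assms(3,2)]
    by (intro conjI Max_Min_le_if_witnesses le_Min_Max_if_witnesses) auto
qed

end
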